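(* Let $\hat a=a_1+a_2\varepsilon$, $\hat b=b_1+b_2\varepsilon\in\mathbb{DC}$ with $a_1,b_1\notin\mathbb R$, and suppose $\hat q=q_1+q_2 j+(q_3+q_4 j)\varepsilon\in\hat{\mathbb U}$ satisfies $\hat q^*\hat a\hat q=\hat b$. Then either $$\hat a=\hat b\quad\text{and}\quad\{\hat q\in\hat{\mathbb U}:\hat a\hat q=\hat q\hat b\}=\mathbb{DC}\cap\hat{\mathbb U},$$ or $$\hat a=\overline{\hat b}\quad\text{and}\quad\{\hat q\in\hat{\mathbb U}:\hat a\hat q=\hat q\hat b\}=\{\hat q j:\hat q\in\mathbb{DC}\cap\hat{\mathbb U}\}.$$
   Context: $\mathbb{Q}$ denotes the real quaternions with units $i,j,k$; complex numbers are identified with quaternions $a+bi$ (so $jz=\bar z j$). $\varepsilon$ satisfies $\varepsilon\ne0$, $\varepsilon^2=0$ and commutes with quaternions. $\mathbb{DC}$ is the set of dual complex numbers $a+b\varepsilon$, $a,b\in\mathbb C$, and $\overline{a+b\varepsilon}=\bar a+\bar b\varepsilon$. A dual quaternion is $\tilde p_{st}+\tilde p_{\mathcal I}\varepsilon$ with quaternions $\tilde p_{st},\tilde p_{\mathcal I}$, conjugate $\hat p^*=\tilde p_{st}^*+\tilde p_{\mathcal I}^*\varepsilon$. $\hat{\mathbb U}$ is the set of unit dual quaternions, i.e. those $\hat p$ with $|\hat p|=1$, where $|\hat p|=|\tilde p_{st}|+\frac{\mathrm{sc}(\tilde p_{st}^*\tilde p_{\mathcal I})}{|\tilde p_{st}|}\varepsilon$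 for $\tilde p_{st}\ne0$, $\mathrm{sc}(\tilde p)=\frac12(\tilde p+\tilde p^* )$; equivalently $\hat p^*\hat p=\hat p\hat p^*=1$. *)

theory Defs
  imports Complex_Main
begin

datatype quat = Quat (qre: real) (qi: real) (qj: real) (qk: real)

instantiation quat :: "{zero, one, plus, minus, times}"
begin
definition "0 = Quat 0 0 0 0"
definition "1 = Quat 1 0 0 0"
definition "p + q = Quat (qre p + qre q) (qi p + qi q) (qj p + qj q) (qk p + qk q)"
definition "p - q = Quat (qre p - qre q) (qi p - qi q) (qj p - qj q) (qk p - qk q)"
definition "p * q = Quat
   (qre p * qre q - qi p * qi q - qj p * qj q - qk p * qk q)
   (qre p * qi q + qi p * qre q + qj p * qk q - qk p * qj q)
   (qre p * qj q - qi p * qk q + qj p * qre q + qk p * qi q)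
   (qre p * qk q + qi p * qj q - qj p * qi q + qk p * qre q)"
instance ..
end

definition qcnj :: "quat \<Rightarrow> quat" where
  "qcnj p = Quat (qre p) (- qi p) (- qj p) (- qk p)"

definition qnorm :: "quat \<Rightarrow> real" where
  "qnorm p = sqrt ((qre p)\<^sup>2 + (qi p)\<^sup>2 + (qj p)\<^sup>2 + (qk p)\<^sup>2)"

definition qsc :: "quat \<Rightarrow> quat" where
  "qsc p = Quat ((qre (p + qcnj p)) / 2) ((qi (p + qcnj p)) / 2)
                ((qj (p + qcnj p)) / 2) ((qk (p + qcnj p)) / 2)"

definition qreal :: "real \<Rightarrow> quat" where "qreal r = Quat r 0 0 0"
definition qscale :: "real \<Rightarrow> quat \<Rightarrow> quat" where
  "qscale r p = Quat (r * qre p) (r * qi p) (r * qj p) (r * qk p)"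

definition qcomplex :: "complex \<Rightarrow> quat" where
  "qcomplex z = Quat (Re z) (Im z) 0 0"

text \<open>Dual quaternions p_st + p_I eps, eps^2 = 0, eps central.\<close>
datatype dquat = DQ (dst: quat) (ddu: quat)

instantiation dquat :: "{one, times}"
begin
definition "1 = DQ 1 0"
definition "p * q = DQ (dst p * dst q) (dst p * ddu q + ddu p * dst q)"
instance ..
end

definition dcnj :: "dquat \<Rightarrow> dquat" where
  "dcnj p = DQ (qcnj (dst p)) (qcnj (ddu p))"

text \<open>|p| = |p_st| + sc(p_st^* p_I)/|p_st| eps (for p_st nonzero)\<close>
definition dabs :: "dquat \<Rightarrow> dquat" where
  "dabs p = DQ (qreal (qnorm (dst p)))
               (qscale (1 / qnorm (dst p)) (qsc (qcnj (dst p) * ddu p)))"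

definition UDQ :: "dquat set" where
  "UDQ = {p. dst p \<noteq> 0 \<and> dabs p = 1}"

definition dc :: "complex \<Rightarrow> complex \<Rightarrow> dquat" where
  "dc a b = DQ (qcomplex a) (qcomplex b)"

definition DC :: "dquat set" where
  "DC = {dc a b | a b. True}"

definition dj :: dquat where "dj = DQ (Quat 0 0 1 0) 0"

end

theory Submission
  imports Defs
begin

text \<open>Write quaternions as \<open>x + y j\<close> with complex \<open>x, y\<close> (\<open>quat_cpart\<close> and
  \<open>quat_jpart\<close> below). Since \<open>j z = cnj z j\<close>, multiplying \<open>q = x + y j\<close> on the left by a dual
  complex number \<open>a\<close> and on the right by \<open>b\<close> acts on the \<open>x\<close>-part through \<open>a - b\<close> and on the
  \<open>y\<close>-part through \<open>a - cnj b\<close>. For a unit \<open>q\<close>, the conjugation equation becomes \<open>a q = q b\<close>,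
  and as \<open>b\<^sub>1 \<noteq> cnj b\<^sub>1\<close> exactly one of the two standard parts of \<open>q\<close> survives: this forces
  \<open>a = b\<close> (then \<open>q\<close> is dual complex) or \<open>a = cnj b\<close> (then \<open>q\<close> is a dual complex multiple
  of \<open>j\<close>).\<close>

definition quat_cpart :: "quat \<Rightarrow> complex" where
  "quat_cpart p = Complex (qre p) (qi p)"

definition quat_jpart :: "quat \<Rightarrow> complex" where
  "quat_jpart p = Complex (qj p) (qk p)"

lemma quat_eq_iff: "p = q \<longleftrightarrow> quat_cpart p = quat_cpart q \<and> quat_jpart p = quat_jpart q"
  by (cases p; cases q) (auto simp: quat_cpart_def quat_jpart_def)

lemma quat_cpart_mult [simp]:
  "quat_cpart (p * q) = quat_cpart p * quat_cpart q - quat_jpart p * cnj (quat_jpart q)"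
  by (simp add: quat_cpart_def quat_jpart_def times_quat_def complex_eq_iff)

lemma quat_jpart_mult [simp]:
  "quat_jpart (p * q) = quat_cpart p * quat_jpart q + quat_jpart p * cnj (quat_cpart q)"
  by (simp add: quat_cpart_def quat_jpart_def times_quat_def complex_eq_iff algebra_simps)

lemma quat_parts_add [simp]:
  "quat_cpart (p + q) = quat_cpart p + quat_cpart q"
  "quat_jpart (p + q) = quat_jpart p + quat_jpart q"
  by (simp_all add: quat_cpart_def quat_jpart_def plus_quat_def complex_eq_iff)

lemma quat_parts_qcnj [simp]:
  "quat_cpart (qcnj p) = cnj (quat_cpart p)"
  "quat_jpart (qcnj p) = - quat_jpart p"
  by (simp_all add: quat_cpart_def quat_jpart_def qcnj_def complex_eq_iff)

lemma quat_parts_0 [simp]: "quat_cpart 0 = 0" "quat_jpart 0 = 0"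
  by (simp_all add: quat_cpart_def quat_jpart_def zero_quat_def complex_eq_iff)

lemma quat_parts_1 [simp]: "quat_cpart 1 = 1" "quat_jpart 1 = 0"
  by (simp_all add: quat_cpart_def quat_jpart_def one_quat_def complex_eq_iff)

lemma quat_parts_qcomplex [simp]: "quat_cpart (qcomplex z) = z" "quat_jpart (qcomplex z) = 0"
  by (simp_all add: quat_cpart_def quat_jpart_def qcomplex_def complex_eq_iff)

lemma quat_parts_j [simp]: "quat_cpart (Quat 0 0 1 0) = 0" "quat_jpart (Quat 0 0 1 0) = 1"
  by (simp_all add: quat_cpart_def quat_jpart_def complex_eq_iff)

lemma dquat_eq_iff: "p = q \<longleftrightarrow> dst p = dst q \<and> ddu p = ddu q"
  by (cases p; cases q) auto

lemma dquat_mult_sel [simp]: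
  "dst (p * q) = dst p * dst q"
  "ddu (p * q) = dst p * ddu q + ddu p * dst q"
  by (simp_all add: times_dquat_def)

lemma dquat_one_sel [simp]: "dst 1 = 1" "ddu 1 = 0"
  by (simp_all add: one_dquat_def)

lemma dcnj_sel [simp]: "dst (dcnj p) = qcnj (dst p)" "ddu (dcnj p) = qcnj (ddu p)"
  by (simp_all add: dcnj_def)

lemma dc_sel [simp]: "dst (dc a b) = qcomplex a" "ddu (dc a b) = qcomplex b"
  by (simp_all add: dc_def)

lemma dj_sel [simp]: "dst dj = Quat 0 0 1 0" "ddu dj = 0"
  by (simp_all add: dj_def)

lemma dc_eq_iff: "dc a b = dc c d \<longleftrightarrow> a = c \<and> b = d"
  by (simp add: dquat_eq_iff quat_eq_iff)

lemma dquat_mult_assoc: "(p :: dquat) * q * r = p * (q * r)"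
  by (simp add: dquat_eq_iff quat_eq_iff algebra_simps)

lemma dquat_mult_1_left: "1 * (p :: dquat) = p"
  by (simp add: dquat_eq_iff quat_eq_iff)

lemma UDQ_iff:
  "p \<in> UDQ \<longleftrightarrow>
     (cmod (quat_cpart (dst p)))\<^sup>2 + (cmod (quat_jpart (dst p)))\<^sup>2 = 1 \<and>
     Re (cnj (quat_cpart (dst p)) * quat_cpart (ddu p) + quat_jpart (dst p) * cnj (quat_jpart (ddu p))) = 0"
proof -
  obtain s0 s1 s2 s3 where s: "dst p = Quat s0 s1 s2 s3" by (cases "dst p")
  obtain t0 t1 t2 t3 where t: "ddu p = Quat t0 t1 t2 t3" by (cases "ddu p")
  have norm: "(cmod (quat_cpart (dst p)))\<^sup>2 + (cmod (quat_jpart (dst p)))\<^sup>2 = s0\<^sup>2 + s1\<^sup>2 + s2\<^sup>2 + s3\<^sup>2"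
    by (simp add: s quat_cpart_def quat_jpart_def cmod_def)
  show ?thesis
    unfolding UDQ_def dabs_def norm
    by (auto simp: s t qnorm_def qreal_def one_dquat_def one_quat_def zero_quat_def qscale_def
        qsc_def qcnj_def plus_quat_def times_quat_def quat_cpart_def quat_jpart_def algebra_simps)
qed

lemma UDQ_standard_part_nonzero:
  assumes "p \<in> UDQ"
  shows "quat_cpart (dst p) \<noteq> 0 \<or> quat_jpart (dst p) \<noteq> 0"
  using assms by (auto simp: UDQ_iff)

lemma UDQ_mult_dcnj:
  assumes "q \<in> UDQ"
  shows "q * dcnj q = 1"
proof -
  define x y u v where "x = quat_cpart (dst q)" and "y = quat_jpart (dst q)"
    and "u = quat_cpart (ddu q)" and "v = quat_jpart (ddu q)"
  have unit: "(cmod x)\<^sup>2 + (cmod y)\<^sup>2 = 1" "Re (cnj x * u + y * cnj v) = 0"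
    using assms by (auto simp: UDQ_iff x_def y_def u_def v_def)
  have "(Re x)\<^sup>2 + (Im x)\<^sup>2 + ((Re y)\<^sup>2 + (Im y)\<^sup>2) = 1"
    using unit(1) by (simp add: cmod_power2)
  then have standard: "x * cnj x + y * cnj y = 1"
    by (simp add: complex_eq_iff power2_eq_square)
  have dual: "x * cnj u + y * cnj v + u * cnj x + v * cnj y = 0"
    using unit(2) by (simp add: complex_eq_iff algebra_simps)
  show ?thesis
    using standard dual
    by (simp add: dquat_eq_iff quat_eq_iff x_def [symmetric] y_def [symmetric]
        u_def [symmetric] v_def [symmetric] algebra_simps)
qed

lemma UDQ_conj_eq_imp_commute:
  assumes "q \<in> UDQ" and "dcnj q * a * q = b"
  shows "a * q = q * b"
proof -
  have "a * q = (q * dcnj q) * a * q"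
    using UDQ_mult_dcnj [OF assms(1)] by (simp add: dquat_mult_1_left)
  also have "\<dots> = q * (dcnj q * a * q)"
    by (simp add: dquat_mult_assoc)
  finally show ?thesis
    using assms(2) by simp
qed

lemma dc_mult_eq_mult_dc_iff:
  "dc a1 a2 * p = p * dc b1 b2 \<longleftrightarrow>
     quat_cpart (dst p) * (a1 - b1) = 0 \<and>
     quat_jpart (dst p) * (a1 - cnj b1) = 0 \<and>
     quat_cpart (ddu p) * (a1 - b1) + quat_cpart (dst p) * (a2 - b2) = 0 \<and>
     quat_jpart (ddu p) * (a1 - cnj b1) + quat_jpart (dst p) * (a2 - cnj b2) = 0"
  by (simp add: dquat_eq_iff quat_eq_iff algebra_simps)

lemma nonreal_imp_cnj_neq: "b \<notin> \<real> \<Longrightarrow> cnj b \<noteq> b"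
  using Reals_cnj_iff by force

lemma DC_iff: "p \<in> DC \<longleftrightarrow> quat_jpart (dst p) = 0 \<and> quat_jpart (ddu p) = 0"
proof
  assume "p \<in> DC"
  then show "quat_jpart (dst p) = 0 \<and> quat_jpart (ddu p) = 0"
    by (auto simp: DC_def)
next
  assume "quat_jpart (dst p) = 0 \<and> quat_jpart (ddu p) = 0"
  then have "p = dc (quat_cpart (dst p)) (quat_cpart (ddu p))"
    by (simp add: dquat_eq_iff quat_eq_iff)
  then show "p \<in> DC"
    unfolding DC_def by blast
qed

lemma DC_UDQ_times_dj_iff:
  "p \<in> {r * dj | r. r \<in> DC \<inter> UDQ} \<longleftrightarrow>
     p \<in> UDQ \<and> quat_cpart (dst p) = 0 \<and> quat_cpart (ddu p) = 0"
proof
  assume "p \<in> {r * dj | r. r \<in> DC \<inter> UDQ}"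
  then obtain a b where "p = dc a b * dj" and "dc a b \<in> UDQ"
    by (auto simp: DC_def)
  then show "p \<in> UDQ \<and> quat_cpart (dst p) = 0 \<and> quat_cpart (ddu p) = 0"
    by (simp add: UDQ_iff mult.commute)
next
  assume p: "p \<in> UDQ \<and> quat_cpart (dst p) = 0 \<and> quat_cpart (ddu p) = 0"
  then have "p = dc (quat_jpart (dst p)) (quat_jpart (ddu p)) * dj"
    by (simp add: dquat_eq_iff quat_eq_iff)
  moreover have "dc (quat_jpart (dst p)) (quat_jpart (ddu p)) \<in> DC \<inter> UDQ"
    using p by (auto simp: UDQ_iff DC_def mult.commute)
  ultimately show "p \<in> {r * dj | r. r \<in> DC \<inter> UDQ}"
    by blast
qed

lemma UDQ_commute_dc_imp_eq_or_cnj: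
  assumes "b1 \<notin> \<real>" and "q \<in> UDQ" and "dc a1 a2 * q = q * dc b1 b2"
  shows "a1 = b1 \<and> a2 = b2 \<or> a1 = cnj b1 \<and> a2 = cnj b2"
proof -
  have b1: "cnj b1 - b1 \<noteq> 0" "b1 - cnj b1 \<noteq> 0"
    using nonreal_imp_cnj_neq [OF assms(1)] by auto
  from UDQ_standard_part_nonzero [OF assms(2)] show ?thesis
  proof
    assume x: "quat_cpart (dst q) \<noteq> 0"
    then have "a1 = b1"
      using assms(3) by (simp add: dc_mult_eq_mult_dc_iff)
    moreover from this have "quat_jpart (dst q) = 0"
      using assms(3) b1 by (simp add: dc_mult_eq_mult_dc_iff)
    ultimately show ?thesis
      using assms(3) x by (simp add: dc_mult_eq_mult_dc_iff)
  next
    assume y: "quat_jpart (dst q) \<noteq> 0"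
    then have "a1 = cnj b1"
      using assms(3) by (simp add: dc_mult_eq_mult_dc_iff)
    moreover from this have "quat_cpart (dst q) = 0"
      using assms(3) b1 by (simp add: dc_mult_eq_mult_dc_iff)
    ultimately show ?thesis
      using assms(3) y by (simp add: dc_mult_eq_mult_dc_iff)
  qed
qed

lemma UDQ_commuting_dc_self:
  assumes "b1 \<notin> \<real>"
  shows "{p \<in> UDQ. dc b1 b2 * p = p * dc b1 b2} = DC \<inter> UDQ"
  using nonreal_imp_cnj_neq [OF assms] by (auto simp: dc_mult_eq_mult_dc_iff DC_iff)

lemma UDQ_intertwining_dc_cnj:
  assumes "b1 \<notin> \<real>"
  shows "{p \<in> UDQ. dc (cnj b1) (cnj b2) * p = p * dc b1 b2} = {r * dj | r. r \<in> DC \<inter> UDQ}"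
proof -
  have "cnj b1 - b1 \<noteq> 0"
    using nonreal_imp_cnj_neq [OF assms] by simp
  then show ?thesis
    using DC_UDQ_times_dj_iff by (auto simp: dc_mult_eq_mult_dc_iff)
qed

theorem corollary3p1:
  fixes a1 a2 b1 b2 :: complex and q :: dquat
  assumes "a1 \<notin> \<real>" and "b1 \<notin> \<real>"
    and "q \<in> UDQ"
    and "dcnj q * dc a1 a2 * q = dc b1 b2"
  shows "(dc a1 a2 = dc b1 b2 \<and>
            {p \<in> UDQ. dc a1 a2 * p = p * dc b1 b2} = DC \<inter> UDQ)
       \<or> (dc a1 a2 = dc (cnj b1) (cnj b2) \<and>
            {p \<in> UDQ. dc a1 a2 * p = p * dc b1 b2} = {p * dj | p. p \<in> DC \<inter> UDQ})"
proof -
  have "dc a1 a2 * q = q * dc b1 b2"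
    using UDQ_conj_eq_imp_commute [OF assms(3,4)] .
  then have "a1 = b1 \<and> a2 = b2 \<or> a1 = cnj b1 \<and> a2 = cnj b2"
    using UDQ_commute_dc_imp_eq_or_cnj assms(2,3) by blast
  then show ?thesis
  proof
    assume "a1 = b1 \<and> a2 = b2"
    then show ?thesis
      using UDQ_commuting_dc_self [OF assms(2)] by simp
  next
    assume "a1 = cnj b1 \<and> a2 = cnj b2"
    then show ?thesis
      using UDQ_intertwining_dc_cnj [OF assms(2)] by simp
  qed
qed

end
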